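(* Consider the 2NC-TAP instance with node set $\{r,v_1,v_2,v_3,p_1,p_2,p_3,q_1,q_2,q_3\}$, tree $T$ with edges $rv_i$, $v_ip_i$, $v_iq_i$ for $i=1,2,3$ (all of cost $0$), and six links of cost $1$: $p_1p_2,p_2p_3,p_3p_1,q_1q_2,q_2q_3,q_3q_1$. Then every feasible link set has cost at least $4$ (and there is one of cost $4$), while the vector $\hat x$ with $\hat x_\ell=\frac12$ for all six links is feasible for the partition LP $(P)$ and has cost $3$. Consequently the integrality ratio of $(P)$ for 2NC-TAP is at least $\frac43$.
   Context: An instance of 2NC-TAP consists of a simple undirected graph $G=(V,E)$, a spanning tree $T$ of $G$ with cost-$0$ edges, and nonnegative costs on the links $L(G)=E\setminus T$; a link set $F$ is feasible if $(V,T\cup F)$ is 2-node connected. Let $N(T)$ be the set of non-leaf nodes of $T$. For $u\in N(T)$, let $\Pi_u$ be the set of partitions $\mathcal P$ of $V\setminus\{u\}$ such that the vertex set of each connected component of $T-u$ is contained in a set of $\mathcal P$. A link crosses $\mathcal P\in\Pi_u$ if neither end node is $u$ and its end nodes lie in different sets of $\mathcal P$. Partition LP $(P)$: minimize $\sum_\ell\mathrm{cost}(\ell)x_\ell$ subject to $\sum_{\ell\text{ crosses }\mathcal P}x_\ell\ge|\mathcal P|-1$ for all $u\in N(T)$, $\mathcal P\in\Pi_u$, and $x\ge 0$. *)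

theory Defs
  imports Complex_Main "HOL-Library.Disjoint_Sets"
begin

definition adj_in :: "'a set \<Rightarrow> 'a set set \<Rightarrow> ('a \<times> 'a) set" where
  "adj_in W E = {(a, b). {a, b} \<in> E \<and> a \<noteq> b \<and> a \<in> W \<and> b \<in> W}"

definition connected_on :: "'a set \<Rightarrow> 'a set set \<Rightarrow> bool" where
  "connected_on W E \<longleftrightarrow> (\<forall>x\<in>W. \<forall>y\<in>W. (x, y) \<in> (adj_in W E)\<^sup>*)"

definition two_node_connected :: "'a set \<Rightarrow> 'a set set \<Rightarrow> bool" where
  "two_node_connected W E \<longleftrightarrow> finite W \<and> card W \<ge> 3 \<and> connected_on W E \<and>
     (\<forall>u\<in>W. connected_on (W - {u}) E)"

definition degree :: "'a set set \<Rightarrow> 'a \<Rightarrow> nat" where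
  "degree E x = card {e \<in> E. x \<in> e}"

definition nonleaf_nodes :: "'a set \<Rightarrow> 'a set set \<Rightarrow> 'a set" where
  "nonleaf_nodes V T = {x \<in> V. degree T x \<ge> 2}"

definition comp_minus :: "'a set \<Rightarrow> 'a set set \<Rightarrow> 'a \<Rightarrow> 'a \<Rightarrow> 'a set" where
  "comp_minus V T u x = {y \<in> V - {u}. (x, y) \<in> (adj_in (V - {u}) T)\<^sup>*}"

definition Pi_u :: "'a set \<Rightarrow> 'a set set \<Rightarrow> 'a \<Rightarrow> 'a set set set" where
  "Pi_u V T u = {P. partition_on (V - {u}) P \<and>
      (\<forall>x\<in>V - {u}. \<exists>S\<in>P. comp_minus V T u x \<subseteq> S)}"

definition crosses :: "'a \<Rightarrow> 'a set set \<Rightarrow> 'a set \<Rightarrow> bool" where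
  "crosses u P l \<longleftrightarrow> u \<notin> l \<and> \<not> (\<exists>S\<in>P. l \<subseteq> S)"

definition partition_lp_feasible ::
  "'a set \<Rightarrow> 'a set set \<Rightarrow> 'a set set \<Rightarrow> ('a set \<Rightarrow> real) \<Rightarrow> bool" where
  "partition_lp_feasible V T L x \<longleftrightarrow> (\<forall>l\<in>L. x l \<ge> 0) \<and>
     (\<forall>u\<in>nonleaf_nodes V T. \<forall>P\<in>Pi_u V T u.
        (\<Sum>l\<in>{l\<in>L. crosses u P l}. x l) \<ge> real (card P) - 1)"

definition tap_feasible :: "'a set \<Rightarrow> 'a set set \<Rightarrow> 'a set set \<Rightarrow> 'a set set \<Rightarrow> bool" where
  "tap_feasible V T L F \<longleftrightarrow> F \<subseteq> L \<and> two_node_connected V (T \<union> F)"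

datatype node = R | V1 | V2 | V3 | P1 | P2 | P3 | Q1 | Q2 | Q3

definition ex_V :: "node set" where
  "ex_V = {R, V1, V2, V3, P1, P2, P3, Q1, Q2, Q3}"

definition ex_T :: "node set set" where
  "ex_T = {{R, V1}, {R, V2}, {R, V3}, {V1, P1}, {V2, P2}, {V3, P3},
           {V1, Q1}, {V2, Q2}, {V3, Q3}}"

definition ex_L :: "node set set" where
  "ex_L = {{P1, P2}, {P2, P3}, {P3, P1}, {Q1, Q2}, {Q2, Q3}, {Q3, Q1}}"

definition ex_cost :: "node set \<Rightarrow> real" where
  "ex_cost l = (if l \<in> ex_L then 1 else 0)"

definition x_hat :: "node set \<Rightarrow> real" where
  "x_hat l = (if l \<in> ex_L then 1/2 else 0)"

end

(* Every leaf of T must be an end of a link of a feasible F: otherwise deleting its parent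
   cuts it off from R.  The leaves P1, P2, P3 lie only on the three P-links, and covering three
   nodes needs two links; the same holds for the Q-links, so every feasible F costs at least 4,
   which the two paths P1 P2 P3 and Q1 Q2 Q3 attain.  For the LP, a partition in \<Pi>_u only matters
   through how it groups the at most three components of T - u, and checking the few groupings
   shows that the crossing half-weighted links always carry at least |P| - 1. *)

theory Submission
  imports Defs
begin

lemma sym_adj_in: "sym (adj_in W E)"
  by (auto simp: sym_def adj_in_def insert_commute)

lemma rtrancl_adj_in_descent:
  fixes f :: "'a \<Rightarrow> nat"
  assumes descent: "\<And>x. x \<in> W \<Longrightarrow> c x \<noteq> x \<Longrightarrow> \<exists>y\<in>W. {x, y} \<in> E \<and> c y = c x \<and> f y < f x"
    and "x \<in> W"
  shows "(c x, x) \<in> (adj_in W E)\<^sup>*"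
  using \<open>x \<in> W\<close>
proof (induction "f x" arbitrary: x rule: less_induct)
  case less
  show ?case
  proof (cases "c x = x")
    case False
    then obtain y where y: "y \<in> W" "{x, y} \<in> E" "c y = c x" "f y < f x"
      using descent less.prems by blast
    then have "(c x, y) \<in> (adj_in W E)\<^sup>*"
      using less.hyps by metis
    moreover have "(y, x) \<in> adj_in W E"
      using y less.prems by (auto simp: adj_in_def insert_commute)
    ultimately show ?thesis ..
  qed simp
qed

lemma connected_on_descent:
  fixes f :: "'a \<Rightarrow> nat"
  assumes "\<And>x. x \<in> W \<Longrightarrow> x \<noteq> h \<Longrightarrow> \<exists>y\<in>W. {x, y} \<in> E \<and> f y < f x"
  shows "connected_on W E"
  unfolding connected_on_def
proof (intro ballI)
  fix x y assume "x \<in> W" "y \<in> W"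
  have from_h: "(h, z) \<in> (adj_in W E)\<^sup>*" if "z \<in> W" for z
    using rtrancl_adj_in_descent[where c = "\<lambda>_. h" and f = f] assms that by auto
  have "(x, h) \<in> (adj_in W E)\<^sup>*"
    using from_h[OF \<open>x \<in> W\<close>] sym_rtrancl[OF sym_adj_in] by (meson symD)
  then show "(x, y) \<in> (adj_in W E)\<^sup>*"
    using from_h[OF \<open>y \<in> W\<close>] by (rule rtrancl_trans)
qed

lemma connected_on_neighbour:
  assumes "connected_on W E" "x \<in> W" "y \<in> W" "x \<noteq> y"
  obtains z where "z \<in> W" "{x, z} \<in> E" "z \<noteq> x"
proof -
  have "(x, y) \<in> (adj_in W E)\<^sup>*"
    using assms by (simp add: connected_on_def)
  then obtain z where "(x, z) \<in> adj_in W E"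
    using \<open>x \<noteq> y\<close> by (auto elim: converse_rtranclE)
  then show ?thesis
    using that by (auto simp: adj_in_def)
qed

lemma Pi_u_block_map:
  assumes "P \<in> Pi_u V T u"
  obtains B where "P = B ` (V - {u})"
    and "\<And>x y. x \<in> V - {u} \<Longrightarrow> y \<in> V - {u} \<Longrightarrow> crosses u P {x, y} \<longleftrightarrow> B x \<noteq> B y"
    and "\<And>x y. x \<in> V - {u} \<Longrightarrow> (x, y) \<in> (adj_in (V - {u}) T)\<^sup>* \<Longrightarrow> B y = B x"
proof -
  have part: "partition_on (V - {u}) P"
    and comp: "\<And>x. x \<in> V - {u} \<Longrightarrow> \<exists>S\<in>P. comp_minus V T u x \<subseteq> S"
    using assms by (auto simp: Pi_u_def)
  define B where "B x = (THE S. S \<in> P \<and> x \<in> S)" for x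
  have unique: "\<exists>!S. S \<in> P \<and> x \<in> S" if "x \<in> V - {u}" for x
    using that part by (auto simp: partition_on_def disjoint_def)
  have B_in: "B x \<in> P" "x \<in> B x" if "x \<in> V - {u}" for x
    using theI'[OF unique[OF that]] by (simp_all add: B_def)
  have B_eq: "B x = S" if "S \<in> P" "x \<in> S" for x S
  proof -
    have "x \<in> V - {u}"
      using that partition_onD1[OF part] by blast
    then show ?thesis
      unfolding B_def using that by (simp add: the1_equality[OF unique])
  qed
  have "P = B ` (V - {u})"
  proof
    show "P \<subseteq> B ` (V - {u})"
    proof
      fix S assume "S \<in> P"
      then obtain x where "x \<in> S"
        using partition_onD3[OF part] by (metis all_not_in_conv)
      with \<open>S \<in> P\<close> show "S \<in> B ` (V - {u})"
        using B_eq partition_onD1[OF part] by blast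
    qed
  qed (use B_in in blast)
  moreover have "crosses u P {x, y} \<longleftrightarrow> B x \<noteq> B y" if "x \<in> V - {u}" "y \<in> V - {u}" for x y
  proof -
    have "(\<exists>S\<in>P. {x, y} \<subseteq> S) \<longleftrightarrow> B x = B y"
      using B_in[OF that(1)] B_in[OF that(2)] B_eq[where x = x] B_eq[where x = y] by blast
    then show ?thesis
      using that by (auto simp: crosses_def)
  qed
  moreover have "B y = B x" if "x \<in> V - {u}" "(x, y) \<in> (adj_in (V - {u}) T)\<^sup>*" for x y
  proof -
    obtain S where "S \<in> P" "comp_minus V T u x \<subseteq> S"
      using comp \<open>x \<in> V - {u}\<close> by blast
    moreover have "y \<in> V - {u}"
      using that(2,1) by (induction rule: rtrancl_induct) (auto simp: adj_in_def)
    then have "x \<in> comp_minus V T u x" "y \<in> comp_minus V T u x"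
      using that by (auto simp: comp_minus_def)
    ultimately show ?thesis
      using B_eq by blast
  qed
  ultimately show ?thesis
    using that by blast
qed

lemma card_le_twice_card_edge_cover:
  assumes "finite F" "X \<subseteq> \<Union>F" "\<And>e. e \<in> F \<Longrightarrow> card e = 2"
  shows "card X \<le> 2 * card F"
proof -
  have "finite (\<Union>F)"
    using assms by (metis card_eq_0_iff finite_Union zero_neq_numeral)
  then have "card X \<le> card (\<Union>F)"
    using assms(2) by (rule card_mono)
  also have "\<dots> \<le> sum card F"
    by (rule card_Union_le_sum_card)
  also have "\<dots> = 2 * card F"
    using assms(3) by simp
  finally show ?thesis .
qed

lemma ex_V_UNIV: "ex_V = UNIV"
proof -
  have "x \<in> ex_V" for x
    by (cases x) (simp_all add: ex_V_def)
  then show ?thesis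
    by blast
qed

fun parent :: "node \<Rightarrow> node" where
  "parent R = R"
| "parent V1 = R" | "parent V2 = R" | "parent V3 = R"
| "parent P1 = V1" | "parent Q1 = V1"
| "parent P2 = V2" | "parent Q2 = V2"
| "parent P3 = V3" | "parent Q3 = V3"

fun depth :: "node \<Rightarrow> nat" where
  "depth R = 0"
| "depth V1 = 1" | "depth V2 = 1" | "depth V3 = 1"
| "depth _ = 2"

lemma parent_edge: "x \<noteq> R \<Longrightarrow> {x, parent x} \<in> ex_T"
  by (cases x) (simp_all add: ex_T_def insert_commute)

lemma depth_parent_less: "x \<noteq> R \<Longrightarrow> depth (parent x) < depth x"
  by (cases x) simp_all

lemma tree_edge_at_leaf: "depth p = 2 \<Longrightarrow> e \<in> ex_T \<Longrightarrow> p \<in> e \<Longrightarrow> e = {p, parent p}"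
  unfolding ex_T_def by (elim insertE emptyE; cases p) (simp_all add: insert_commute)

lemma degree_leaf: "depth p = 2 \<Longrightarrow> degree ex_T p \<le> 1"
proof -
  assume "depth p = 2"
  then have "{e \<in> ex_T. p \<in> e} \<subseteq> {{p, parent p}}"
    using tree_edge_at_leaf by blast
  then show ?thesis
    unfolding degree_def using card_mono[of "{{p, parent p}}"] by simp
qed

lemma nonleaf_nodes_ex_subset: "nonleaf_nodes ex_V ex_T \<subseteq> {R, V1, V2, V3}"
proof
  fix x assume "x \<in> nonleaf_nodes ex_V ex_T"
  then have "depth x \<noteq> 2"
    using degree_leaf by (fastforce simp: nonleaf_nodes_def)
  then show "x \<in> {R, V1, V2, V3}"
    by (cases x) simp_all
qed

(* The components of T - u are the subtrees of the children of u and, for u \<noteq> R, the rest of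
   the tree; component_rep u picks the child, respectively R, as representative. *)
definition component_rep :: "node \<Rightarrow> node \<Rightarrow> node" where
  "component_rep u x = (if parent x = u then x else if u = R then parent x else R)"

lemma component_rep_parent:
  "component_rep u x \<noteq> x \<Longrightarrow> component_rep u (parent x) = component_rep u x"
  by (cases x; cases u) (simp_all add: component_rep_def)

lemma component_rep_reaches:
  assumes "x \<in> ex_V - {u}"
  shows "component_rep u x \<in> ex_V - {u}"
    and "(component_rep u x, x) \<in> (adj_in (ex_V - {u}) ex_T)\<^sup>*"
proof -
  show "component_rep u x \<in> ex_V - {u}"
    using assms by (simp add: component_rep_def ex_V_UNIV)
  show "(component_rep u x, x) \<in> (adj_in (ex_V - {u}) ex_T)\<^sup>*"
  proof (rule rtrancl_adj_in_descent[where f = depth, OF _ assms])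
    fix y assume y: "y \<in> ex_V - {u}" "component_rep u y \<noteq> y"
    then have "y \<noteq> R" "parent y \<noteq> u"
      by (auto simp: component_rep_def split: if_splits)
    then show "\<exists>z\<in>ex_V - {u}. {y, z} \<in> ex_T \<and> component_rep u z = component_rep u y \<and> depth z < depth y"
      using parent_edge depth_parent_less component_rep_parent[OF y(2)]
      by (intro bexI[of _ "parent y"]) (simp_all add: ex_V_UNIV)
  qed
qed

lemma Pi_u_ex_block_map:
  assumes "P \<in> Pi_u ex_V ex_T u"
  obtains B :: "node \<Rightarrow> node set" where "card P = card (B ` component_rep u ` (ex_V - {u}))"
    and "\<And>x y. x \<in> ex_V - {u} \<Longrightarrow> y \<in> ex_V - {u} \<Longrightarrow>
      crosses u P {x, y} \<longleftrightarrow> B (component_rep u x) \<noteq> B (component_rep u y)"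
proof -
  obtain B where P_eq: "P = B ` (ex_V - {u})"
    and cross: "\<And>x y. x \<in> ex_V - {u} \<Longrightarrow> y \<in> ex_V - {u} \<Longrightarrow> crosses u P {x, y} \<longleftrightarrow> B x \<noteq> B y"
    and same: "\<And>x y. x \<in> ex_V - {u} \<Longrightarrow> (x, y) \<in> (adj_in (ex_V - {u}) ex_T)\<^sup>* \<Longrightarrow> B y = B x"
    using Pi_u_block_map[OF assms] by blast
  have B_rep: "B x = B (component_rep u x)" if "x \<in> ex_V - {u}" for x
    using same component_rep_reaches[OF that] by metis
  have card_eq: "card P = card (B ` component_rep u ` (ex_V - {u}))"
    using B_rep unfolding P_eq image_image by (metis image_cong)
  have cross_eq: "crosses u P {x, y} \<longleftrightarrow> B (component_rep u x) \<noteq> B (component_rep u y)"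
    if "x \<in> ex_V - {u}" "y \<in> ex_V - {u}" for x y
    using cross[OF that] B_rep[OF that(1)] B_rep[OF that(2)] by presburger
  show ?thesis
    by (rule that[OF card_eq cross_eq])
qed

lemma x_hat_partition_constraint:
  assumes u: "u \<in> {R, V1, V2, V3}" and P: "P \<in> Pi_u ex_V ex_T u"
  shows "real (card P) - 1 \<le> (\<Sum>l\<in>{l \<in> ex_L. crosses u P l}. x_hat l)"
proof -
  obtain B :: "node \<Rightarrow> node set" where card_P: "card P = card (B ` component_rep u ` (ex_V - {u}))"
    and cross: "\<And>x y. x \<in> ex_V - {u} \<Longrightarrow> y \<in> ex_V - {u} \<Longrightarrow>
      crosses u P {x, y} \<longleftrightarrow> B (component_rep u x) \<noteq> B (component_rep u y)"
    using Pi_u_ex_block_map[OF P] by blast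
  have cross_leaves: "crosses u P {x, y} \<longleftrightarrow> B (component_rep u x) \<noteq> B (component_rep u y)"
    if "depth x = 2" "depth y = 2" for x y
  proof -
    have "x \<in> ex_V - {u}" "y \<in> ex_V - {u}"
      using u that by (auto simp: ex_V_UNIV)
    then show ?thesis
      by (rule cross)
  qed
  have "(\<Sum>l\<in>{l \<in> ex_L. crosses u P l}. x_hat l) = (\<Sum>l\<in>ex_L. if crosses u P l then 1/2 else 0)"
    by (simp add: sum.inter_filter[symmetric] ex_L_def x_hat_def)
  moreover from u consider "u = R" | "u = V1" | "u = V2" | "u = V3"
    by blast
  then have "real (card (B ` component_rep u ` (ex_V - {u}))) - 1 \<le> (\<Sum>l\<in>ex_L. if crosses u P l then 1/2 else 0)"
  proof cases
    case 1
    then show ?thesis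
      by (cases "B V1 = B V2"; cases "B V1 = B V3"; cases "B V2 = B V3")
        (simp_all add: cross_leaves[unfolded 1] ex_V_def ex_L_def component_rep_def insert_Diff_if doubleton_eq_iff card_insert_if)
  next
    case 2
    then show ?thesis
      by (cases "B P1 = B Q1"; cases "B P1 = B R"; cases "B Q1 = B R")
        (simp_all add: cross_leaves[unfolded 2] ex_V_def ex_L_def component_rep_def insert_Diff_if doubleton_eq_iff card_insert_if)
  next
    case 3
    then show ?thesis
      by (cases "B P2 = B Q2"; cases "B P2 = B R"; cases "B Q2 = B R")
        (simp_all add: cross_leaves[unfolded 3] ex_V_def ex_L_def component_rep_def insert_Diff_if doubleton_eq_iff card_insert_if)
  next
    case 4
    then show ?thesis
      by (cases "B P3 = B Q3"; cases "B P3 = B R"; cases "B Q3 = B R")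
        (simp_all add: cross_leaves[unfolded 4] ex_V_def ex_L_def component_rep_def insert_Diff_if doubleton_eq_iff card_insert_if)
  qed
  ultimately show ?thesis
    unfolding card_P by simp
qed

lemma leaf_covered_by_link:
  assumes "tap_feasible ex_V ex_T ex_L F" and "depth p = 2"
  shows "\<exists>l\<in>F. p \<in> l"
proof -
  have "p \<noteq> R \<and> parent p \<noteq> p \<and> parent p \<noteq> R"
    using assms(2) by (cases p) simp_all
  moreover have "connected_on (ex_V - {parent p}) (ex_T \<union> F)"
    using assms(1) UNIV_I[of "parent p", folded ex_V_UNIV]
    unfolding tap_feasible_def two_node_connected_def by blast
  ultimately obtain z where "z \<noteq> parent p" "{p, z} \<in> ex_T \<union> F"
    by (elim connected_on_neighbour[of _ _ p R]) (auto simp: ex_V_UNIV)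
  then have "{p, z} \<in> F"
    using tree_edge_at_leaf[OF assms(2), of "{p, z}"] by (auto simp: doubleton_eq_iff)
  then show ?thesis
    by blast
qed

definition P_links :: "node set set" where
  "P_links = {{P1, P2}, {P2, P3}, {P3, P1}}"

definition Q_links :: "node set set" where
  "Q_links = {{Q1, Q2}, {Q2, Q3}, {Q3, Q1}}"

lemma ex_L_triangles: "ex_L = P_links \<union> Q_links"
  by (auto simp: ex_L_def P_links_def Q_links_def)

lemma triangle_links:
  assumes "K \<in> {P_links, Q_links}"
  shows "card (\<Union>K) = 3"
    and "\<And>e. e \<in> K \<Longrightarrow> card e = 2"
    and "\<And>p. p \<in> \<Union>K \<Longrightarrow> depth p = 2"
    and "\<And>l p. l \<in> ex_L \<Longrightarrow> p \<in> l \<Longrightarrow> p \<in> \<Union>K \<Longrightarrow> l \<in> K"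
  using assms by (auto simp: ex_L_triangles P_links_def Q_links_def card_insert_if)

lemma finite_ex_L: "finite ex_L"
  by (simp add: ex_L_def)

lemma feasible_uses_two_links_per_triangle:
  assumes F: "tap_feasible ex_V ex_T ex_L F" and K: "K \<in> {P_links, Q_links}"
  shows "2 \<le> card (F \<inter> K)"
proof -
  have "F \<subseteq> ex_L"
    using F by (simp add: tap_feasible_def)
  have "\<Union>K \<subseteq> \<Union>(F \<inter> K)"
  proof
    fix p assume p: "p \<in> \<Union>K"
    then obtain l where "l \<in> F" "p \<in> l"
      using leaf_covered_by_link[OF F] triangle_links(3)[OF K] by blast
    then show "p \<in> \<Union>(F \<inter> K)"
      using triangle_links(4)[OF K _ _ p] \<open>F \<subseteq> ex_L\<close> by blast
  qed
  then have "card (\<Union>K) \<le> 2 * card (F \<inter> K)"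
    using finite_subset[OF \<open>F \<subseteq> ex_L\<close> finite_ex_L] triangle_links(2)[OF K]
    by (intro card_le_twice_card_edge_cover) auto
  then show ?thesis
    using triangle_links(1)[OF K] by linarith
qed

lemma feasible_card_ge_4:
  assumes F: "tap_feasible ex_V ex_T ex_L F"
  shows "4 \<le> card F"
proof -
  have "F \<subseteq> ex_L"
    using F by (simp add: tap_feasible_def)
  then have "finite F"
    using finite_ex_L by (rule finite_subset)
  have "P_links \<inter> Q_links = {}"
    by (auto simp: P_links_def Q_links_def doubleton_eq_iff)
  have "4 \<le> card (F \<inter> P_links) + card (F \<inter> Q_links)"
    using feasible_uses_two_links_per_triangle[OF F, of P_links]
      feasible_uses_two_links_per_triangle[OF F, of Q_links] by simp
  also have "\<dots> = card (F \<inter> P_links \<union> F \<inter> Q_links)"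
    using \<open>finite F\<close> \<open>P_links \<inter> Q_links = {}\<close> by (intro card_Un_disjoint[symmetric]) auto
  also have "\<dots> \<le> card F"
    using \<open>finite F\<close> by (intro card_mono) auto
  finally show ?thesis .
qed

lemma cost_eq_card: "F \<subseteq> ex_L \<Longrightarrow> (\<Sum>l\<in>F. ex_cost l) = real (card F)"
  by (simp add: ex_cost_def subset_iff)

definition two_paths :: "node set set" where
  "two_paths = {{P1, P2}, {P2, P3}, {Q1, Q2}, {Q2, Q3}}"

lemma two_paths_connected_minus: "connected_on (ex_V - {u}) (ex_T \<union> two_paths)"
proof (cases "u = R")
  case True
  \<comment> \<open>distance from V1 after deleting R\<close>
  let ?f = "\<lambda>x. case x of R \<Rightarrow> 0 | V1 \<Rightarrow> 0 | P1 \<Rightarrow> 1 | Q1 \<Rightarrow> 1 | P2 \<Rightarrow> 2 | Q2 \<Rightarrow> 2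
    | V2 \<Rightarrow> 3 | P3 \<Rightarrow> 3 | Q3 \<Rightarrow> 3 | V3 \<Rightarrow> (4::nat)"
  show ?thesis
  proof (rule connected_on_descent[of _ V1 _ ?f])
    fix x assume "x \<in> ex_V - {u}" "x \<noteq> V1"
    then show "\<exists>y\<in>ex_V - {u}. {x, y} \<in> ex_T \<union> two_paths \<and> ?f y < ?f x"
      using True by (cases x) (simp_all add: ex_V_def ex_T_def two_paths_def doubleton_eq_iff insert_Diff_if)
  qed
next
  case False
  \<comment> \<open>the children of u can only leave through a link\<close>
  let ?f = "\<lambda>x. if parent x = u then 3 else depth x :: nat"
  show ?thesis
  proof (rule connected_on_descent[of _ R _ ?f])
    fix x assume "x \<in> ex_V - {u}" "x \<noteq> R"
    then show "\<exists>y\<in>ex_V - {u}. {x, y} \<in> ex_T \<union> two_paths \<and> ?f y < ?f x"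
      using False by (cases x; cases u) (simp_all add: ex_V_def ex_T_def two_paths_def doubleton_eq_iff insert_Diff_if)
  qed
qed

lemma two_paths_connected: "connected_on ex_V (ex_T \<union> two_paths)"
proof (rule connected_on_descent[of _ R _ depth])
  fix x assume "x \<in> ex_V" "x \<noteq> R"
  then show "\<exists>y\<in>ex_V. {x, y} \<in> ex_T \<union> two_paths \<and> depth y < depth x"
    using parent_edge depth_parent_less by (intro bexI[of _ "parent x"]) (simp_all add: ex_V_UNIV)
qed

lemma two_paths_feasible: "tap_feasible ex_V ex_T ex_L two_paths"
proof -
  have "finite ex_V" "card ex_V = 10" "two_paths \<subseteq> ex_L"
    by (simp_all add: ex_V_def ex_L_def two_paths_def)
  then show ?thesis
    using two_paths_connected two_paths_connected_minus
    by (simp add: tap_feasible_def two_node_connected_def)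
qed

lemma two_paths_cost: "(\<Sum>l\<in>two_paths. ex_cost l) = 4"
proof -
  have "two_paths \<subseteq> ex_L" "card two_paths = 4"
    by (simp_all add: ex_L_def two_paths_def doubleton_eq_iff)
  then show ?thesis
    by (simp add: cost_eq_card)
qed

lemma x_hat_feasible: "partition_lp_feasible ex_V ex_T ex_L x_hat"
  unfolding partition_lp_feasible_def
  using nonleaf_nodes_ex_subset x_hat_partition_constraint by (auto simp: x_hat_def)

lemma x_hat_cost: "(\<Sum>l\<in>ex_L. ex_cost l * x_hat l) = 3"
proof -
  have "(\<Sum>l\<in>ex_L. ex_cost l * x_hat l) = (\<Sum>l\<in>ex_L. 1/2)"
    by (rule sum.cong) (auto simp: ex_cost_def x_hat_def)
  moreover have "card ex_L = 6"
    by (simp add: ex_L_def doubleton_eq_iff)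
  ultimately show ?thesis
    by simp
qed

theorem mainTheorem7:
  shows "(\<forall>F. tap_feasible ex_V ex_T ex_L F \<longrightarrow> (\<Sum>l\<in>F. ex_cost l) \<ge> 4)
    \<and> (\<exists>F. tap_feasible ex_V ex_T ex_L F \<and> (\<Sum>l\<in>F. ex_cost l) = 4)
    \<and> partition_lp_feasible ex_V ex_T ex_L x_hat
    \<and> (\<Sum>l\<in>ex_L. ex_cost l * x_hat l) = 3
    \<and> (\<forall>F. tap_feasible ex_V ex_T ex_L F \<longrightarrow>
          (\<Sum>l\<in>F. ex_cost l) \<ge> 4/3 * (\<Sum>l\<in>ex_L. ex_cost l * x_hat l))"
proof -
  have lower_bound: "(\<Sum>l\<in>F. ex_cost l) \<ge> 4" if "tap_feasible ex_V ex_T ex_L F" for F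
    using that feasible_card_ge_4 cost_eq_card by (simp add: tap_feasible_def)
  then show ?thesis
    using two_paths_feasible two_paths_cost x_hat_feasible x_hat_cost by auto
qed

end
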